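(* Let $G$ and $H$ be two connected nontrivial graphs and $S\subseteq V(G\Box H)$. If $V(G^h)\cup V({}^gH)\subseteq\langle S\rangle_C$ for some $g\in V(G)$ and $h\in V(H)$, then $S$ is a cycle hull set of $G\Box H$.
   Context: All graphs are finite, simple and undirected. For a graph $G$ and $S\subseteq V(G)$, the cycle interval $\langle S\rangle$ consists of the vertices of $S$ together with every vertex $w\in V(G)\setminus S$ such that $G[S\cup\{w\}]$ contains a cycle through $w$; $S$ is cycle convex if $\langle S\rangle=S$; the cycle convex hull $\langle S\rangle_C$ is the smallest cycle convex set containing $S$; $S$ is a cycle hull set if $\langle S\rangle_C$ is the whole vertex set. The Cartesian product $G\Box H$ has vertex set $V(G)\times V(H)$, with $(g_1,h_1)\sim(g_2,h_2)$ iff ($g_1\sim g_2$ and $h_1=h_2$) or ($g_1=g_2$ and $h_1\sim h_2$). For $h\in V(H)$, $G^h$ is the subgraph induced by $V(G)\times\{h\}$; for $g\in V(G)$, ${}^gH$ is the subgraph induced by $\{g\}\times V(H)$. A graph is nontrivial if it has at least two vertices. *)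

theory Defs
  imports Main
begin

definition graph :: "'a set \<Rightarrow> ('a \<Rightarrow> 'a \<Rightarrow> bool) \<Rightarrow> bool" where
  "graph V E \<longleftrightarrow> finite V \<and> (\<forall>x y. E x y \<longrightarrow> x \<in> V \<and> y \<in> V)
     \<and> (\<forall>x y. E x y \<longrightarrow> E y x) \<and> (\<forall>x. \<not> E x x)"

definition connected_graph :: "'a set \<Rightarrow> ('a \<Rightarrow> 'a \<Rightarrow> bool) \<Rightarrow> bool" where
  "connected_graph V E \<longleftrightarrow> V \<noteq> {} \<and> (\<forall>x\<in>V. \<forall>y\<in>V. E\<^sup>*\<^sup>* x y)"

definition nontrivial_graph :: "'a set \<Rightarrow> bool" where
  "nontrivial_graph V \<longleftrightarrow> card V \<ge> 2"

definition is_cycle_in :: "('a \<Rightarrow> 'a \<Rightarrow> bool) \<Rightarrow> 'a set \<Rightarrow> 'a list \<Rightarrow> bool" where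
  "is_cycle_in E A c \<longleftrightarrow> length c \<ge> 3 \<and> distinct c \<and> set c \<subseteq> A
     \<and> (\<forall>i. Suc i < length c \<longrightarrow> E (c ! i) (c ! Suc i))
     \<and> E (last c) (hd c)"

definition cycle_interval :: "'a set \<Rightarrow> ('a \<Rightarrow> 'a \<Rightarrow> bool) \<Rightarrow> 'a set \<Rightarrow> 'a set" where
  "cycle_interval V E S = S \<union> {w \<in> V - S. \<exists>c. is_cycle_in E (S \<union> {w}) c \<and> w \<in> set c}"

definition cycle_convex :: "'a set \<Rightarrow> ('a \<Rightarrow> 'a \<Rightarrow> bool) \<Rightarrow> 'a set \<Rightarrow> bool" where
  "cycle_convex V E S \<longleftrightarrow> S \<subseteq> V \<and> cycle_interval V E S = S"

definition cycle_hull :: "'a set \<Rightarrow> ('a \<Rightarrow> 'a \<Rightarrow> bool) \<Rightarrow> 'a set \<Rightarrow> 'a set" where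
  "cycle_hull V E S = \<Inter> {T. S \<subseteq> T \<and> cycle_convex V E T}"

definition cycle_hull_set :: "'a set \<Rightarrow> ('a \<Rightarrow> 'a \<Rightarrow> bool) \<Rightarrow> 'a set \<Rightarrow> bool" where
  "cycle_hull_set V E S \<longleftrightarrow> cycle_hull V E S = V"

definition cart_vertices :: "'a set \<Rightarrow> 'b set \<Rightarrow> ('a \<times> 'b) set" where
  "cart_vertices VG VH = VG \<times> VH"

definition cart_edges :: "('a \<Rightarrow> 'a \<Rightarrow> bool) \<Rightarrow> ('b \<Rightarrow> 'b \<Rightarrow> bool) \<Rightarrow> ('a \<times> 'b) \<Rightarrow> ('a \<times> 'b) \<Rightarrow> bool" where
  "cart_edges EG EH p q \<longleftrightarrow>
     (EG (fst p) (fst q) \<and> snd p = snd q) \<or> (fst p = fst q \<and> EH (snd p) (snd q))"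

definition G_layer :: "'a set \<Rightarrow> 'b \<Rightarrow> ('a \<times> 'b) set" where
  "G_layer VG h = VG \<times> {h}"

definition H_layer :: "'a \<Rightarrow> 'b set \<Rightarrow> ('a \<times> 'b) set" where
  "H_layer g VH = {g} \<times> VH"

end

theory Submission
  imports Defs
begin

text \<open>For edges \<open>ab\<close> of \<open>G\<close> and \<open>cd\<close> of \<open>H\<close>, the vertices \<open>(a,c), (a,d), (b,d), (b,c)\<close> form a
  4-cycle of \<open>G \<box> H\<close>, so a cycle convex set containing three of them contains the fourth.
  Starting from the two layers through \<open>(g,h)\<close>, this fills the \<open>H\<close>-layer over every
  \<open>G\<close>-neighbour of a filled \<open>H\<close>-layer (walking along \<open>H\<close> from its vertex in \<open>G\<^sup>h\<close>), and by
  connectivity of \<open>G\<close> every \<open>H\<close>-layer.\<close>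

lemma cycle_hull_subset:
  assumes "S \<subseteq> V"
  shows "cycle_hull V E S \<subseteq> V"
proof -
  have "cycle_convex V E V"
    unfolding cycle_convex_def cycle_interval_def by auto
  with assms show ?thesis
    unfolding cycle_hull_def by blast
qed

lemma cycle_interval_cycle_hull_subset:
  "cycle_interval V E (cycle_hull V E S) \<subseteq> cycle_hull V E S"
proof
  fix w assume "w \<in> cycle_interval V E (cycle_hull V E S)"
  then consider "w \<in> cycle_hull V E S"
    | c where "w \<in> V" "is_cycle_in E (cycle_hull V E S \<union> {w}) c" "w \<in> set c"
    unfolding cycle_interval_def by blast
  then show "w \<in> cycle_hull V E S"
  proof cases
    case 2
    show ?thesis
      unfolding cycle_hull_def
    proof (rule InterI)
      fix T assume "T \<in> {T. S \<subseteq> T \<and> cycle_convex V E T}"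
      then have T: "S \<subseteq> T" "cycle_convex V E T" by auto
      then have "cycle_hull V E S \<subseteq> T"
        unfolding cycle_hull_def by blast
      with 2 have "w \<in> cycle_interval V E T"
        unfolding cycle_interval_def is_cycle_in_def by blast
      with T(2) show "w \<in> T"
        unfolding cycle_convex_def by blast
    qed
  qed
qed

lemma cart_square_mem_cycle_hull:
  fixes VG :: "'a set" and EG :: "'a \<Rightarrow> 'a \<Rightarrow> bool"
    and VH :: "'b set" and EH :: "'b \<Rightarrow> 'b \<Rightarrow> bool"
    and S :: "('a \<times> 'b) set"
  defines "C \<equiv> cycle_hull (cart_vertices VG VH) (cart_edges EG EH) S"
  assumes G: "graph VG EG" and H: "graph VH EH"
    and ab: "EG a b" and cd: "EH c d"
    and corners: "(a, c) \<in> C" "(a, d) \<in> C" "(b, c) \<in> C"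
  shows "(b, d) \<in> C"
proof -
  have ba: "a \<noteq> b" "b \<in> VG" "EG b a"
    using G ab unfolding graph_def by metis+
  have dc: "c \<noteq> d" "d \<in> VH" "EH d c"
    using H cd unfolding graph_def by metis+
  let ?square = "[(a, c), (a, d), (b, d), (b, c)]"
  have "is_cycle_in (cart_edges EG EH) (C \<union> {(b, d)}) ?square"
    unfolding is_cycle_in_def
  proof (intro conjI allI impI)
    fix i assume "Suc i < length ?square"
    then have "i = 0 \<or> i = 1 \<or> i = 2" by auto
    with ab cd ba dc show "cart_edges EG EH (?square ! i) (?square ! Suc i)"
      unfolding cart_edges_def by auto
  qed (use ab ba dc corners in \<open>auto simp: cart_edges_def\<close>)
  with ba dc have "(b, d) \<in> cycle_interval (cart_vertices VG VH) (cart_edges EG EH) C"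
    unfolding cycle_interval_def cart_vertices_def by auto
  then show ?thesis
    unfolding C_def by (rule subsetD[OF cycle_interval_cycle_hull_subset])
qed

lemma H_layer_subset_cycle_hull_step:
  fixes VG :: "'a set" and EG :: "'a \<Rightarrow> 'a \<Rightarrow> bool"
    and VH :: "'b set" and EH :: "'b \<Rightarrow> 'b \<Rightarrow> bool"
    and S :: "('a \<times> 'b) set"
  defines "C \<equiv> cycle_hull (cart_vertices VG VH) (cart_edges EG EH) S"
  assumes G: "graph VG EG" and H: "graph VH EH" and H_connected: "connected_graph VH EH"
    and ab: "EG a b" and h: "h \<in> VH"
    and layer_a: "H_layer a VH \<subseteq> C" and bh: "(b, h) \<in> C"
  shows "H_layer b VH \<subseteq> C"
proof -
  have "(b, y) \<in> C" if "EH\<^sup>*\<^sup>* h y" for y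
    using that
  proof (induction rule: rtranclp_induct)
    case base
    show ?case by (fact bh)
  next
    case (step y z)
    then have "y \<in> VH" "z \<in> VH"
      using H unfolding graph_def by blast+
    with layer_a have "(a, y) \<in> C" "(a, z) \<in> C"
      unfolding H_layer_def by auto
    with step show ?case
      using cart_square_mem_cycle_hull[OF G H ab \<open>EH y z\<close>] unfolding C_def by blast
  qed
  with H_connected h show ?thesis
    unfolding H_layer_def connected_graph_def by blast
qed

theorem mainTheorem6:
  fixes VG :: "'a set" and EG :: "'a \<Rightarrow> 'a \<Rightarrow> bool"
    and VH :: "'b set" and EH :: "'b \<Rightarrow> 'b \<Rightarrow> bool"
    and S :: "('a \<times> 'b) set"
  assumes "graph VG EG" and "graph VH EH"
    and "connected_graph VG EG" and "connected_graph VH EH"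
    and "nontrivial_graph VG" and "nontrivial_graph VH"
    and "S \<subseteq> cart_vertices VG VH"
    and "g \<in> VG" and "h \<in> VH"
    and "G_layer VG h \<union> H_layer g VH \<subseteq> cycle_hull (cart_vertices VG VH) (cart_edges EG EH) S"
  shows "cycle_hull_set (cart_vertices VG VH) (cart_edges EG EH) S"
proof -
  let ?C = "cycle_hull (cart_vertices VG VH) (cart_edges EG EH) S"
  have layers: "G_layer VG h \<subseteq> ?C" "H_layer g VH \<subseteq> ?C"
    using assms(10) by auto
  have "H_layer x VH \<subseteq> ?C" if "EG\<^sup>*\<^sup>* g x" for x
    using that
  proof (induction rule: rtranclp_induct)
    case base
    show ?case by (fact layers(2))
  next
    case (step x y)
    then have "(y, h) \<in> ?C"
      using layers(1) assms(1) unfolding G_layer_def graph_def by blast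
    with step show ?case
      by (intro H_layer_subset_cycle_hull_step[OF assms(1,2,4) \<open>EG x y\<close> assms(9)])
  qed
  then have "cart_vertices VG VH \<subseteq> ?C"
    using assms(3,8) unfolding cart_vertices_def H_layer_def connected_graph_def by blast
  with cycle_hull_subset[OF assms(7)] show ?thesis
    unfolding cycle_hull_set_def by blast
qed

end
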